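(* Let $m\leq n$ be positive integers ($n$ finite). Then $\gamma_{gr}^{L,2}(P_m\Box P_n)=mn$.
   Context: $P_m$ is the path on $m$ vertices and $G\Box H$ is the Cartesian product: vertex set $V(G)\times V(H)$, with $(u,v)\sim(x,y)$ iff ($u=x$ and $vy\in E(H)$) or ($v=y$ and $ux\in E(G)$). For a vertex $v$, $N(v)$ is its open neighborhood and $N[v]=N(v)\cup\{v\}$. A sequence $S=(v_1,\ldots,v_r)$ of distinct vertices is a $2$-$L$-sequence if for each $i$ there is $u_i\in N[v_i]$ such that the number of indices $j<i$ with $u_i\in N(v_j)$ is less than $2$. $\gamma_{gr}^{L,2}(G)$ is the maximum length of a $2$-$L$-sequence of $G$. *)

theory Defs
  imports Main
begin

definition open_nbhd :: "'a set \<Rightarrow> ('a \<Rightarrow> 'a \<Rightarrow> bool) \<Rightarrow> 'a \<Rightarrow> 'a set" where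
  "open_nbhd V adj v = {u \<in> V. adj v u}"

definition closed_nbhd :: "'a set \<Rightarrow> ('a \<Rightarrow> 'a \<Rightarrow> bool) \<Rightarrow> 'a \<Rightarrow> 'a set" where
  "closed_nbhd V adj v = insert v (open_nbhd V adj v)"

definition is_kL_sequence :: "nat \<Rightarrow> 'a set \<Rightarrow> ('a \<Rightarrow> 'a \<Rightarrow> bool) \<Rightarrow> 'a list \<Rightarrow> bool" where
  "is_kL_sequence k V adj S \<longleftrightarrow> distinct S \<and> set S \<subseteq> V \<and>
     (\<forall>i < length S. \<exists>u \<in> closed_nbhd V adj (S ! i).
        card {j. j < i \<and> u \<in> open_nbhd V adj (S ! j)} < k)"

definition gamma_grL :: "nat \<Rightarrow> 'a set \<Rightarrow> ('a \<Rightarrow> 'a \<Rightarrow> bool) \<Rightarrow> nat" where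
  "gamma_grL k V adj = Max {length S | S. is_kL_sequence k V adj S}"

text \<open>Path P_m on vertices {0..<m}: i ~ j iff |i - j| = 1.\<close>
definition path_adj :: "nat \<Rightarrow> nat \<Rightarrow> bool" where
  "path_adj i j \<longleftrightarrow> i = Suc j \<or> j = Suc i"

definition cart_prod_adj :: "('a \<Rightarrow> 'a \<Rightarrow> bool) \<Rightarrow> ('b \<Rightarrow> 'b \<Rightarrow> bool) \<Rightarrow> 'a \<times> 'b \<Rightarrow> 'a \<times> 'b \<Rightarrow> bool" where
  "cart_prod_adj adjG adjH p q \<longleftrightarrow>
     (fst p = fst q \<and> adjH (snd p) (snd q)) \<or> (snd p = snd q \<and> adjG (fst p) (fst q))"

end

theory Submission
  imports Defs "HOL-Library.Product_Lexorder"
begin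

text \<open>Listing the vertices by increasing value of an injective key \<open>r\<close> gives a
  k-L-sequence as soon as every vertex \<open>v\<close> has a footprint \<open>u \<in> N[v]\<close> lying in
  \<open>N(w)\<close> for fewer than \<open>k\<close> vertices \<open>w\<close> of smaller key. The path \<open>P\<^sub>n\<close> has such a
  key for \<open>k = 1\<close>. In \<open>P\<^sub>m \<box> H\<close> we list the copies of \<open>H\<close> one after the other: a vertex
  outside the last copy takes the vertex of the next copy as footprint, and a vertex in the
  last copy takes its footprint in \<open>H\<close>, which then has at most one earlier neighbour,
  namely the vertex of the previous copy. Hence all \<open>mn\<close> vertices of the grid fit into a
  2-L-sequence.\<close>

definition kL_ranking ::
    "nat \<Rightarrow> 'a set \<Rightarrow> ('a \<Rightarrow> 'a \<Rightarrow> bool) \<Rightarrow> ('a \<Rightarrow> 'b::linorder) \<Rightarrow> bool" where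
  "kL_ranking k V adj r \<longleftrightarrow> inj_on r V \<and>
     (\<forall>v \<in> V. \<exists>u \<in> closed_nbhd V adj v.
        card {w \<in> V. r w < r v \<and> u \<in> open_nbhd V adj w} < k)"

lemma kL_sequence_if_kL_ranking:
  assumes "finite V" and "kL_ranking k V adj r"
  obtains S where "is_kL_sequence k V adj S" and "set S = V"
proof -
  have inj: "inj_on r V"
    using assms(2) by (simp add: kL_ranking_def)
  interpret folding_insort_key "(\<le>)" "(<)" V r
    by unfold_locales (fact inj)
  obtain S where sorted: "sorted_wrt (<) (map r S)" and set_S: "set S = V"
    using finite_set_strict_sorted[OF order.refl \<open>finite V\<close>] by blast
  have distinct: "distinct S"
    using sorted by (auto simp: strict_sorted_iff distinct_map)
  have earlier_iff: "j < i \<longleftrightarrow> r (S ! j) < r (S ! i)"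
    if "i < length S" "j < length S" for i j
    using sorted that
    by (metis length_map linorder_neq_iff nth_map order_less_asym sorted_wrt_iff_nth_less)
  have earlier_set: "card {j. j < i \<and> P (S ! j)} = card {w \<in> V. r w < r (S ! i) \<and> P w}"
    if "i < length S" for i P
  proof -
    have "(!) S ` {j. j < i \<and> P (S ! j)} = {w \<in> V. r w < r (S ! i) \<and> P w}"
    proof (intro equalityI subsetI)
      fix w assume "w \<in> (!) S ` {j. j < i \<and> P (S ! j)}"
      then obtain j where "j < i" "P (S ! j)" "w = S ! j" by blast
      then show "w \<in> {w \<in> V. r w < r (S ! i) \<and> P w}"
        using that earlier_iff[of i j] set_S by auto
    next
      fix w assume w: "w \<in> {w \<in> V. r w < r (S ! i) \<and> P w}"
      then obtain j where "j < length S" "w = S ! j"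
        using set_S by (metis (no_types, lifting) in_set_conv_nth mem_Collect_eq)
      then show "w \<in> (!) S ` {j. j < i \<and> P (S ! j)}"
        using that earlier_iff[of i j] w by auto
    qed
    moreover have "inj_on ((!) S) {j. j < i \<and> P (S ! j)}"
      using that distinct by (intro inj_on_nth) auto
    ultimately show ?thesis
      by (metis card_image)
  qed
  have "is_kL_sequence k V adj S"
    unfolding is_kL_sequence_def
  proof (intro conjI allI impI)
    fix i assume "i < length S"
    then have "S ! i \<in> V"
      using set_S nth_mem by blast
    then obtain u where "u \<in> closed_nbhd V adj (S ! i)"
      and "card {w \<in> V. r w < r (S ! i) \<and> u \<in> open_nbhd V adj w} < k"
      using assms(2) by (auto simp: kL_ranking_def)
    then show "\<exists>u \<in> closed_nbhd V adj (S ! i). card {j. j < i \<and> u \<in> open_nbhd V adj (S ! j)} < k"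
      using earlier_set[OF \<open>i < length S\<close>, of "\<lambda>w. u \<in> open_nbhd V adj w"] by metis
  qed (use distinct set_S in auto)
  then show thesis
    using that set_S by blast
qed

lemma gamma_grL_eq_card:
  assumes "finite V" and "is_kL_sequence k V adj S" and "set S = V"
  shows "gamma_grL k V adj = card V"
proof -
  have bound: "length T \<le> card V" if "is_kL_sequence k V adj T" for T
    using that \<open>finite V\<close> by (metis card_mono distinct_card is_kL_sequence_def)
  have "length S = card V"
    using assms(2,3) by (metis distinct_card is_kL_sequence_def)
  then show ?thesis
    unfolding gamma_grL_def
    using assms(2) bound
    by (intro Max_eqI) (auto intro: finite_subset[of _ "{..card V}"] exI[of _ S])
qed

definition path_rank :: "nat \<Rightarrow> nat \<Rightarrow> nat" where
  "path_rank n b = (if b < 2 then n + b else n - b)"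

text \<open>The path is listed as \<open>n - 1, n - 2, \<dots>, 2, 0, 1\<close>; vertex \<open>b\<close> uses the
  footprint \<open>b - 1\<close>, which for \<open>b = 0\<close> is \<open>0\<close> itself.\<close>

lemma path_kL_ranking: "kL_ranking 1 {0..<n} path_adj (path_rank n)"
proof -
  have inj: "inj_on (path_rank n) {0..<n}"
    by (auto simp: inj_on_def path_rank_def split: if_splits)
  have no_earlier_neighbour: "\<not> path_adj w (b - 1)"
    if "w < n" "b < n" "path_rank n w < path_rank n b" for w b
    using that unfolding path_rank_def path_adj_def by (auto split: if_splits)
  have "\<exists>u \<in> closed_nbhd {0..<n} path_adj b.
      card {w \<in> {0..<n}. path_rank n w < path_rank n b \<and> u \<in> open_nbhd {0..<n} path_adj w} < 1"
    if "b < n" for b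
  proof
    show "b - 1 \<in> closed_nbhd {0..<n} path_adj b"
      using that by (cases b) (auto simp: closed_nbhd_def open_nbhd_def path_adj_def)
    have "{w \<in> {0..<n}. path_rank n w < path_rank n b \<and> b - 1 \<in> open_nbhd {0..<n} path_adj w} = {}"
      using that no_earlier_neighbour by (auto simp: open_nbhd_def)
    then show "card {w \<in> {0..<n}. path_rank n w < path_rank n b
        \<and> b - 1 \<in> open_nbhd {0..<n} path_adj w} < 1"
      by simp
  qed
  with inj show ?thesis
    by (auto simp: kL_ranking_def)
qed

lemma cart_prod_adj_Pair [simp]:
  "cart_prod_adj adjG adjH (a, b) (a', b') \<longleftrightarrow> (a = a' \<and> adjH b b') \<or> (b = b' \<and> adjG a a')"
  by (simp add: cart_prod_adj_def)

lemma cart_prod_path_kL_ranking: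
  assumes "finite W" and H: "kL_ranking 1 W adjH r"
  shows "kL_ranking 2 ({0..<m} \<times> W) (cart_prod_adj path_adj adjH) (\<lambda>(a, b). (a, r b))"
proof -
  let ?V = "{0..<m} \<times> W" and ?adj = "cart_prod_adj path_adj adjH"
    and ?R = "\<lambda>(a, b). (a, r b)"
  let ?earlier = "\<lambda>v u. {w \<in> ?V. ?R w < ?R v \<and> u \<in> open_nbhd ?V ?adj w}"
  have inj: "inj_on ?R ?V"
    using H by (auto simp: kL_ranking_def inj_on_def)
  have footprint: "\<exists>u \<in> closed_nbhd ?V ?adj (a, b). card (?earlier (a, b) u) < 2"
    if "a < m" "b \<in> W" for a b
  proof (cases "Suc a < m")
    case True
    have "\<not> ?adj w (Suc a, b)" if "?R w < ?R (a, b)" for w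
      using that by (cases w) (auto simp: path_adj_def)
    then have "?earlier (a, b) (Suc a, b) = {}"
      by (auto simp: open_nbhd_def)
    then have "card (?earlier (a, b) (Suc a, b)) < 2"
      by (metis card.empty zero_less_numeral)
    moreover have "(Suc a, b) \<in> closed_nbhd ?V ?adj (a, b)"
      using True that by (simp add: closed_nbhd_def open_nbhd_def path_adj_def)
    ultimately show ?thesis
      by blast
  next
    case False
    obtain u where u: "u \<in> closed_nbhd W adjH b"
      and "card {w \<in> W. r w < r b \<and> u \<in> open_nbhd W adjH w} < 1"
      using H \<open>b \<in> W\<close> by (auto simp: kL_ranking_def)
    then have "{w \<in> W. r w < r b \<and> u \<in> open_nbhd W adjH w} = {}"
      using \<open>finite W\<close> by simp
    moreover have "u \<in> W"
      using u \<open>b \<in> W\<close> by (auto simp: closed_nbhd_def open_nbhd_def)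
    ultimately have none_earlier: "\<not> adjH b' u" if "b' \<in> W" "r b' < r b" for b'
      using that by (auto simp: open_nbhd_def)
    have "w = (a - 1, u)" if "w \<in> ?earlier (a, b) (a, u)" for w
    proof (cases w)
      case (Pair a' b')
      with that have "a' < m" "b' \<in> W" "(a', r b') < (a, r b)" "?adj (a', b') (a, u)"
        by (auto simp: open_nbhd_def)
      with False none_earlier show ?thesis
        using Pair by (auto simp: path_adj_def)
    qed
    then have "?earlier (a, b) (a, u) \<subseteq> {(a - 1, u)}"
      by blast
    then have "card (?earlier (a, b) (a, u)) \<le> card {(a - 1, u)}"
      by (intro card_mono) simp_all
    then have "card (?earlier (a, b) (a, u)) < 2"
      by simp
    moreover have "(a, u) \<in> closed_nbhd ?V ?adj (a, b)"
      using u that by (auto simp: closed_nbhd_def open_nbhd_def)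
    ultimately show ?thesis
      by blast
  qed
  show ?thesis
    unfolding kL_ranking_def
  proof (intro conjI inj ballI)
    fix v assume "v \<in> ?V"
    then obtain a b where "v = (a, b)" "a < m" "b \<in> W"
      by auto
    then show "\<exists>u \<in> closed_nbhd ?V ?adj v. card (?earlier v u) < 2"
      using footprint by simp
  qed
qed

theorem mainTheorem14:
  fixes m n :: nat
  assumes "1 \<le> m" and "m \<le> n"
  shows "gamma_grL 2 ({0..<m} \<times> {0..<n}) (cart_prod_adj path_adj path_adj) = m * n"
proof -
  let ?V = "{0..<m} \<times> {0..<n}" and ?adj = "cart_prod_adj path_adj path_adj"
  have "finite ?V"
    by simp
  moreover have "kL_ranking 2 ?V ?adj (\<lambda>(a, b). (a, path_rank n b))"
    using cart_prod_path_kL_ranking[OF _ path_kL_ranking] by simp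
  ultimately obtain S where "is_kL_sequence 2 ?V ?adj S" and "set S = ?V"
    using kL_sequence_if_kL_ranking by metis
  with \<open>finite ?V\<close> have "gamma_grL 2 ?V ?adj = card ?V"
    by (rule gamma_grL_eq_card)
  then show ?thesis
    by simp
qed

end
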